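(* Assume $n\ge 3t+1$. In any execution of COOL, if $\eta^{[2]}=2$ then $\eta^{[3]}\le 1$.
   Context: Setting. $n$ processors indexed by $[1:n]$, pairwise joined by reliable private synchronous channels; recipients know senders. At most $t$ processors are dishonest, controlled by an adversary who may make them deviate arbitrarily (missing values replaced by a fixed default); the others are honest. Processor $i$ holds an $\ell$-bit initial message $\boldsymbol w_i$. $\phi$ is a default value different from every $\ell$-bit message. Logarithms are base 2. Code. $k=\lfloor t/5\rfloor+1$, $c=\lceil \max\{\ell,(t/5+1)\log(n+1)\}/k\rceil$. Messages are zero-padded to $kc$ bits and viewed in $GF(2^c)^k$. Integers in $[1:n]$ are identified with distinct nonzero elements of $GF(2^c)$; $\boldsymbol h_i\in GF(2^c)^k$ has entries $h_{i,j}=\prod_{p\in[1:k],\,p\ne j}\frac{i-p}{j-p}$ (field arithmetic). COOL, Phases 1–3 (honest processor $i$). Initialization: updated message $\boldsymbol w^{(i)}:=\boldsymbol w_i$, $y^{(i)}_j:=\boldsymbol h_j^{\mathsf T}\boldsymbol w_i$, $u_i(i):=1$. Phase 1. (a) Send $(y^{(i)}_j,y^{(i)}_i)$ to each $j\ne i$. (b) For $j\ne i$, link indicator $u_i(j):=1$ if the pair received from $j$ equals $(y^{(i)}_i,y^{(i)}_j)$, else $0$. Success indicator $s_i:=1$ if $\sum_{j=1}^n u_i(j)\ge n-t$; otherwise $s_i:=0$ and $\boldsymbol w^{(i)}:=\phi$. (c) Send $s_i$ to all; each processor records the indicator received from each $j$ (own for itself) and forms $\mathcal S_1=\{j:s_j=1\}$,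 $\mathcal S_0=\{j:s_j=0\}$ (views may differ between processors). Phase 2. If $s_i=1$: set $u_i(j):=0$ for all $j\in\mathcal S_0$; if now $\sum_j u_i(j)<n-t$, set $s_i:=0$, $\boldsymbol w^{(i)}:=\phi$ and send $s_i=0$ to all. Everyone overwrites recorded indicators with newly received ones and recomputes $\mathcal S_0,\mathcal S_1$. Phase 3 begins by repeating the steps of Phase 2 once more (followed by a vote and binary agreement, irrelevant here). Notation. For $p\in\{1,2,3\}$, $s^{[p]}_i$ is the value of honest processor $i$'s success indicator at the end of (the indicator-updating steps of) Phase $p$, and $\eta^{[p]}$ is the number of distinct values in $\{\boldsymbol w_i: i\text{ honest},\ s^{[p]}_i=1\}$ (initial messages). *)

theory Defs
  imports Complex_Main "HOL-Library.Cardinality"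
begin

definition cool_k :: "nat \<Rightarrow> nat" where
  "cool_k t = t div 5 + 1"

definition cool_c :: "nat \<Rightarrow> nat \<Rightarrow> nat \<Rightarrow> nat" where
  "cool_c n t l = nat \<lceil> max (real l) ((real t / 5 + 1) * log 2 (real n + 1)) / real (cool_k t) \<rceil>"

text \<open>alpha identifies integers with distinct nonzero field elements;
  h alpha k i j is the entry h_{i,j} of the Lagrange vector h_i.\<close>
definition cool_h :: "(nat \<Rightarrow> 'f::field) \<Rightarrow> nat \<Rightarrow> nat \<Rightarrow> nat \<Rightarrow> 'f" where
  "cool_h alpha k i j = (\<Prod>p\<in>{1..k} - {j}. (alpha i - alpha p) / (alpha j - alpha p))"

text \<open>Zero-pad an l-bit message (bool list) to k*c bits and cut it into k blocks of c bits;
  block j (j in [1:k]) is mapped to GF(2^c) by the bijection beta.\<close>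
definition cool_enc :: "(bool list \<Rightarrow> 'f) \<Rightarrow> nat \<Rightarrow> nat \<Rightarrow> bool list \<Rightarrow> nat \<Rightarrow> 'f" where
  "cool_enc beta k c m j = beta (take c (drop ((j - 1) * c) (m @ replicate (k * c - length m) False)))"

definition cool_code :: "(nat \<Rightarrow> 'f::field) \<Rightarrow> (bool list \<Rightarrow> 'f) \<Rightarrow> nat \<Rightarrow> nat \<Rightarrow> bool list \<Rightarrow> nat \<Rightarrow> 'f" where
  "cool_code alpha beta k c m i = (\<Sum>j\<in>{1..k}. cool_h alpha k i j * cool_enc beta k c m j)"

text \<open>Y j i = y^{(j)}_i, the i-th coded symbol of honest processor j.
  A j i : pair sent by (dishonest) processor j to processor i in Phase 1(a).
  R1 j i, R2 j i : success indicator sent by (dishonest) j to i in Phase 1(c) / Phase 2.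
  Honest senders' messages are determined by the protocol; adversarial values are used only
  for senders outside H.\<close>

definition cool_u1 :: "nat set \<Rightarrow> (nat \<Rightarrow> nat \<Rightarrow> 'f) \<Rightarrow> (nat \<Rightarrow> nat \<Rightarrow> 'f \<times> 'f) \<Rightarrow> nat \<Rightarrow> nat \<Rightarrow> bool" where
  "cool_u1 H Y A i j =
     (if j = i then True
      else (if j \<in> H then (Y j i, Y j j) else A j i) = (Y i i, Y i j))"

definition cool_s1 :: "nat \<Rightarrow> nat \<Rightarrow> nat set \<Rightarrow> (nat \<Rightarrow> nat \<Rightarrow> 'f) \<Rightarrow> (nat \<Rightarrow> nat \<Rightarrow> 'f \<times> 'f) \<Rightarrow> nat \<Rightarrow> bool" where
  "cool_s1 n t H Y A i = (n - t \<le> card {j \<in> {1..n}. cool_u1 H Y A i j})"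

text \<open>Indicator of j recorded by i after Phase 1(c).\<close>
definition cool_rec1 :: "nat \<Rightarrow> nat \<Rightarrow> nat set \<Rightarrow> (nat \<Rightarrow> nat \<Rightarrow> 'f) \<Rightarrow> (nat \<Rightarrow> nat \<Rightarrow> 'f \<times> 'f)
    \<Rightarrow> (nat \<Rightarrow> nat \<Rightarrow> bool) \<Rightarrow> nat \<Rightarrow> nat \<Rightarrow> bool" where
  "cool_rec1 n t H Y A R1 i j = (if j \<in> H then cool_s1 n t H Y A j else R1 j i)"

definition cool_u2 :: "nat \<Rightarrow> nat \<Rightarrow> nat set \<Rightarrow> (nat \<Rightarrow> nat \<Rightarrow> 'f) \<Rightarrow> (nat \<Rightarrow> nat \<Rightarrow> 'f \<times> 'f)
    \<Rightarrow> (nat \<Rightarrow> nat \<Rightarrow> bool) \<Rightarrow> nat \<Rightarrow> nat \<Rightarrow> bool" where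
  "cool_u2 n t H Y A R1 i j = (cool_u1 H Y A i j \<and> cool_rec1 n t H Y A R1 i j)"

definition cool_s2 :: "nat \<Rightarrow> nat \<Rightarrow> nat set \<Rightarrow> (nat \<Rightarrow> nat \<Rightarrow> 'f) \<Rightarrow> (nat \<Rightarrow> nat \<Rightarrow> 'f \<times> 'f)
    \<Rightarrow> (nat \<Rightarrow> nat \<Rightarrow> bool) \<Rightarrow> nat \<Rightarrow> bool" where
  "cool_s2 n t H Y A R1 i =
     (cool_s1 n t H Y A i \<and> n - t \<le> card {j \<in> {1..n}. cool_u2 n t H Y A R1 i j})"

text \<open>Indicator of j recorded by i after Phase 2 (honest j: its current indicator,
  since it either re-sent 0 or its old recorded value is unchanged).\<close>
definition cool_rec2 :: "nat \<Rightarrow> nat \<Rightarrow> nat set \<Rightarrow> (nat \<Rightarrow> nat \<Rightarrow> 'f) \<Rightarrow> (nat \<Rightarrow> nat \<Rightarrow> 'f \<times> 'f)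
    \<Rightarrow> (nat \<Rightarrow> nat \<Rightarrow> bool) \<Rightarrow> (nat \<Rightarrow> nat \<Rightarrow> bool) \<Rightarrow> nat \<Rightarrow> nat \<Rightarrow> bool" where
  "cool_rec2 n t H Y A R1 R2 i j = (if j \<in> H then cool_s2 n t H Y A R1 j else R2 j i)"

definition cool_u3 :: "nat \<Rightarrow> nat \<Rightarrow> nat set \<Rightarrow> (nat \<Rightarrow> nat \<Rightarrow> 'f) \<Rightarrow> (nat \<Rightarrow> nat \<Rightarrow> 'f \<times> 'f)
    \<Rightarrow> (nat \<Rightarrow> nat \<Rightarrow> bool) \<Rightarrow> (nat \<Rightarrow> nat \<Rightarrow> bool) \<Rightarrow> nat \<Rightarrow> nat \<Rightarrow> bool" where
  "cool_u3 n t H Y A R1 R2 i j = (cool_u2 n t H Y A R1 i j \<and> cool_rec2 n t H Y A R1 R2 i j)"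

definition cool_s3 :: "nat \<Rightarrow> nat \<Rightarrow> nat set \<Rightarrow> (nat \<Rightarrow> nat \<Rightarrow> 'f) \<Rightarrow> (nat \<Rightarrow> nat \<Rightarrow> 'f \<times> 'f)
    \<Rightarrow> (nat \<Rightarrow> nat \<Rightarrow> bool) \<Rightarrow> (nat \<Rightarrow> nat \<Rightarrow> bool) \<Rightarrow> nat \<Rightarrow> bool" where
  "cool_s3 n t H Y A R1 R2 i =
     (cool_s2 n t H Y A R1 i \<and> n - t \<le> card {j \<in> {1..n}. cool_u3 n t H Y A R1 R2 i j})"

definition cool_eta :: "nat set \<Rightarrow> (nat \<Rightarrow> bool list) \<Rightarrow> (nat \<Rightarrow> bool) \<Rightarrow> nat" where
  "cool_eta H w s = card (w ` {i \<in> H. s i})"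

end

(* Distinct messages have Reed-Solomon codewords (values at the alpha i of Lagrange
   interpolants of degree < k) that agree in at most K = k - 1 <= t/5 positions.
   Suppose both Phase-2 messages a, b survive Phase 3, and let N = n - t - d with d
   dishonest processors. A Phase-3 survivor holding a has n - t links, and a link to an
   honest holder of b lies in the agreement set S of a and b; so at least N - K honest
   Phase-2 survivors hold a outside S. Each of them kept n - t links in Phase 2, going to
   dishonest processors, to Phase-1 survivors holding a (A1 of them), or to honest holders
   q of a third message (O of them), and each such q links to at most K holders of a.
   Double counting gives (N - K) (N - A1) <= O K, and symmetrically for b. As
   A1 + B1 + O <= N + t < 2 N, one of N - A1, N - B1 exceeds O / 2, while N - K > 2 K. *)

theory Submission
  imports Defs "HOL-Computational_Algebra.Polynomial"
begin

definition lagrange_poly :: "(nat \<Rightarrow> 'f::field) \<Rightarrow> nat set \<Rightarrow> (nat \<Rightarrow> 'f) \<Rightarrow> 'f poly" where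
  "lagrange_poly alpha J e =
     (\<Sum>j\<in>J. smult (e j) (\<Prod>p\<in>J - {j}. smult (inverse (alpha j - alpha p)) [:- alpha p, 1:]))"

lemma poly_lagrange_poly:
  "poly (lagrange_poly alpha J e) x =
     (\<Sum>j\<in>J. (\<Prod>p\<in>J - {j}. (x - alpha p) / (alpha j - alpha p)) * e j)"
  by (simp add: lagrange_poly_def poly_sum poly_prod divide_inverse algebra_simps)

lemma degree_lagrange_poly:
  assumes "finite J"
  shows "degree (lagrange_poly alpha J e) \<le> card J - 1"
  unfolding lagrange_poly_def
proof (rule degree_sum_le)
  fix j assume "j \<in> J"
  let ?q = "\<lambda>p. smult (inverse (alpha j - alpha p)) [:- alpha p, 1:]"
  have "degree (\<Prod>p\<in>J - {j}. ?q p) \<le> (\<Sum>p\<in>J - {j}. degree (?q p))"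
    using degree_prod_sum_le[of "J - {j}" ?q] assms by simp
  also have "\<dots> \<le> (\<Sum>p\<in>J - {j}. 1)"
    by (intro sum_mono) (simp add: degree_smult_le)
  also have "\<dots> = card J - 1"
    using \<open>j \<in> J\<close> assms by simp
  finally show "degree (smult (e j) (\<Prod>p\<in>J - {j}. ?q p)) \<le> card J - 1"
    using degree_smult_le order_trans by blast
qed (fact assms)

lemma poly_lagrange_poly_node:
  assumes "finite J" "inj_on alpha J" "i \<in> J"
  shows "poly (lagrange_poly alpha J e) (alpha i) = e i"
proof -
  let ?b = "\<lambda>j. \<Prod>p\<in>J - {j}. (alpha i - alpha p) / (alpha j - alpha p)"
  have other: "(\<Sum>j\<in>J - {i}. ?b j * e j) = 0"
    using assms by (intro sum.neutral ballI) (auto intro: prod_zero)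
  have self: "?b i = 1"
    using assms by (intro prod.neutral) (auto dest: inj_onD)
  have "poly (lagrange_poly alpha J e) (alpha i) = ?b i * e i + (\<Sum>j\<in>J - {i}. ?b j * e j)"
    unfolding poly_lagrange_poly using assms by (simp add: sum.remove)
  then show ?thesis
    using other self by simp
qed

lemma cool_code_eq_poly:
  "cool_code alpha beta k c m i = poly (lagrange_poly alpha {1..k} (cool_enc beta k c m)) (alpha i)"
  unfolding cool_code_def cool_h_def poly_lagrange_poly by simp

lemma eq_if_chunks_eq:
  assumes "length xs = k * c" "length ys = k * c"
    and "\<forall>j<k. take c (drop (j * c) xs) = take c (drop (j * c) ys)"
  shows "xs = ys"
  using assms
proof (induction k arbitrary: xs ys)
  case 0
  then show ?case by simp
next
  case (Suc k)
  have "drop c xs = drop c ys"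
  proof (rule Suc.IH)
    show "\<forall>j<k. take c (drop (j * c) (drop c xs)) = take c (drop (j * c) (drop c ys))"
      using Suc.prems(3) by (auto simp: add.commute)
  qed (use Suc.prems in simp_all)
  moreover have "take c xs = take c ys"
    using Suc.prems(3) by auto
  ultimately show ?case
    by (metis append_take_drop_id)
qed

lemma eq_if_cool_enc_eq:
  assumes "length m = l" "length m' = l" "l \<le> k * c"
    and "inj_on beta {bs. length bs = c}"
    and "\<forall>j\<in>{1..k}. cool_enc beta k c m j = cool_enc beta k c m' j"
  shows "m = m'"
proof -
  define pad where "pad = (\<lambda>m. m @ replicate (k * c - l) False)"
  have len: "length (pad m) = k * c" "length (pad m') = k * c"
    using assms(1-3) by (simp_all add: pad_def)
  have "pad m = pad m'"
  proof (rule eq_if_chunks_eq[OF len], intro allI impI)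
    fix j assume "j < k"
    then have "j * c + c \<le> k * c"
      by (metis add.commute mult_Suc mult_le_mono1 Suc_leI)
    then have "length (take c (drop (j * c) (pad m))) = c"
      "length (take c (drop (j * c) (pad m'))) = c"
      using len by simp_all
    moreover have "beta (take c (drop (j * c) (pad m))) = beta (take c (drop (j * c) (pad m')))"
      using assms(1,2,5) \<open>j < k\<close> by (auto simp: cool_enc_def pad_def elim!: ballE[of _ _ "Suc j"])
    ultimately show "take c (drop (j * c) (pad m)) = take c (drop (j * c) (pad m'))"
      using assms(4) by (auto dest: inj_onD)
  qed
  then show ?thesis
    using assms(1,2) by (metis append_eq_append_conv pad_def)
qed

definition agreement :: "('m \<Rightarrow> nat \<Rightarrow> 'f) \<Rightarrow> nat \<Rightarrow> 'm \<Rightarrow> 'm \<Rightarrow> nat set" where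
  "agreement C n m m' = {p \<in> {1..n}. C m p = C m' p}"

lemma agreement_commute: "agreement C n m m' = agreement C n m' m"
  by (auto simp: agreement_def)

lemma finite_agreement [simp]: "finite (agreement C n m m')"
  by (simp add: agreement_def)

lemma card_agreement_cool_code_le:
  assumes alpha: "inj_on alpha {1..n}" and "k \<le> n"
    and "length m = l" "length m' = l" "l \<le> k * c"
    and "inj_on beta {bs. length bs = c}" and "m \<noteq> m'"
  shows "card (agreement (cool_code alpha beta k c) n m m') \<le> k - 1"
proof (rule ccontr)
  let ?G = "agreement (cool_code alpha beta k c) n m m'"
  let ?P = "\<lambda>m. lagrange_poly alpha {1..k} (cool_enc beta k c m)"
  assume "\<not> card ?G \<le> k - 1"
  moreover have "card (alpha ` ?G) = card ?G"
    using alpha by (intro card_image inj_on_subset[OF alpha]) (auto simp: agreement_def)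
  ultimately have card_G: "card (alpha ` ?G) > k - 1"
    by simp
  have "degree (?P x) \<le> k - 1" for x
    using degree_lagrange_poly[of "{1..k}"] by simp
  moreover have "poly (?P m) x = poly (?P m') x" if "x \<in> alpha ` ?G" for x
    using that by (auto simp: agreement_def cool_code_eq_poly)
  ultimately have "?P m = ?P m'"
    using card_G by (intro poly_eqI_degree[of "alpha ` ?G"]) (auto intro: le_less_trans)
  moreover have "inj_on alpha {1..k}"
    using \<open>k \<le> n\<close> by (intro inj_on_subset[OF alpha]) auto
  ultimately have "\<forall>j\<in>{1..k}. cool_enc beta k c m j = cool_enc beta k c m' j"
    by (metis finite_atLeastAtMost poly_lagrange_poly_node)
  then show False
    using eq_if_cool_enc_eq assms(3-7) by blast
qed

lemma le_cool_k_mult_cool_c: "l \<le> cool_k t * cool_c n t l"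
proof -
  have k: "real (cool_k t) > 0"
    by (simp add: cool_k_def)
  have "real l / real (cool_k t) \<le> real (cool_c n t l)"
    unfolding cool_c_def using k
    by (intro order_trans[OF divide_right_mono real_nat_ceiling_ge]) auto
  then show ?thesis
    using k by (simp add: field_simps flip: of_nat_mult)
qed

lemma card_mult_le_by_double_counting:
  assumes "finite P" "finite Q"
    and "\<And>x. x \<in> P \<Longrightarrow> m \<le> card {q \<in> Q. r x q}"
    and "\<And>q. q \<in> Q \<Longrightarrow> card {x \<in> P. r x q} \<le> K"
  shows "card P * m \<le> card Q * K"
proof -
  have "card P * m = (\<Sum>x\<in>P. m)"
    by simp
  also have "\<dots> \<le> (\<Sum>x\<in>P. card {q \<in> Q. r x q})"
    using assms(3) by (rule sum_mono)
  also have "\<dots> = (\<Sum>x\<in>P. \<Sum>q\<in>Q. if r x q then 1 else 0)"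
    using assms(2) by (simp add: sum.If_cases Int_def)
  also have "\<dots> = (\<Sum>q\<in>Q. \<Sum>x\<in>P. if r x q then 1 else 0)"
    by (rule sum.swap)
  also have "\<dots> = (\<Sum>q\<in>Q. card {x \<in> P. r x q})"
    using assms(1) by (simp add: sum.If_cases Int_def)
  also have "\<dots> \<le> (\<Sum>q\<in>Q. K)"
    using assms(4) by (rule sum_mono)
  finally show ?thesis
    by simp
qed

lemma card_le_if_subset_Un3:
  assumes "finite B" "finite C" "finite D" "A \<subseteq> B \<union> C \<union> D"
  shows "card A \<le> card B + card C + card D"
proof -
  have "card A \<le> card (B \<union> C \<union> D)"
    using assms by (intro card_mono) auto
  also have "\<dots> \<le> card B + card C + card D"
    by (meson add_mono card_Un_le le_refl order_trans)
  finally show ?thesis .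
qed

lemma mult_less_mult_if_double_less:
  fixes x y z K :: nat
  assumes "2 * K < x" "z < 2 * y"
  shows "z * K < x * y"
proof -
  have "2 * (z * K) < (z + 1) * (2 * K + 1)"
    by (simp add: algebra_simps)
  also have "\<dots> \<le> (2 * y) * x"
    using assms by (intro mult_le_mono) auto
  finally show ?thesis
    by (simp add: mult.commute)
qed

lemma counting_bounds_inconsistent:
  fixes N K t a b z x y :: nat
  assumes "5 * K \<le> t" "t + 1 \<le> N" "a + b + z \<le> N + t"
    and "N - K \<le> x" "x * (N - a) \<le> z * K"
    and "N - K \<le> y" "y * (N - b) \<le> z * K"
  shows False
proof -
  have "2 * K < x" "2 * K < y"
    using assms(1,2,4,6) by linarith+
  moreover have "z < 2 * (N - a) \<or> z < 2 * (N - b)"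
    using assms(2,3) by linarith
  ultimately have "z * K < x * (N - a) \<or> z * K < y * (N - b)"
    using mult_less_mult_if_double_less by blast
  then show False
    using assms(5,7) by linarith
qed

locale cool_execution =
  fixes n t :: nat and H :: "nat set" and C :: "'m \<Rightarrow> nat \<Rightarrow> 'f"
    and w :: "nat \<Rightarrow> 'm" and A :: "nat \<Rightarrow> nat \<Rightarrow> 'f \<times> 'f" and R1 R2 :: "nat \<Rightarrow> nat \<Rightarrow> bool"
  assumes honest_subset: "H \<subseteq> {1..n}"
begin

abbreviation "Y \<equiv> \<lambda>j. C (w j)"
abbreviation "u1 \<equiv> cool_u1 H Y A"
abbreviation "s1 \<equiv> cool_s1 n t H Y A"
abbreviation "s2 \<equiv> cool_s2 n t H Y A R1"
abbreviation "s3 \<equiv> cool_s3 n t H Y A R1 R2"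
abbreviation "dishonest \<equiv> {1..n} - H"

definition holders :: "(nat \<Rightarrow> bool) \<Rightarrow> 'm \<Rightarrow> nat set" where
  "holders s m = {i \<in> H. s i \<and> w i = m}"

definition other_holders :: "'m \<Rightarrow> 'm \<Rightarrow> nat set" where
  "other_holders a b = {q \<in> H. w q \<notin> {a, b}}"

lemma finite_honest [simp]: "finite H"
  using honest_subset finite_subset by blast

lemma finite_holders [simp]: "finite (holders s m)"
  by (simp add: holders_def)

lemma finite_other_holders [simp]: "finite (other_holders a b)"
  by (simp add: other_holders_def)

lemma card_honest: "card H = n - card dishonest"
proof -
  have "card H \<le> n"
    using card_mono[OF finite_atLeastAtMost honest_subset] by simp
  then show ?thesis
    using honest_subset by (simp add: card_Diff_subset finite_subset)
qed

lemma link_in_agreement: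
  assumes "i \<in> H" "j \<in> H" "u1 i j" "w i \<noteq> w j"
  shows "i \<in> agreement C n (w i) (w j)" "j \<in> agreement C n (w i) (w j)"
proof -
  have "i \<noteq> j"
    using assms(4) by blast
  then have "C (w j) i = C (w i) i \<and> C (w j) j = C (w i) j"
    using assms(2,3) by (simp add: cool_u1_def)
  then show "i \<in> agreement C n (w i) (w j)" "j \<in> agreement C n (w i) (w j)"
    using assms honest_subset by (auto simp: agreement_def)
qed

lemma phase3_link_count:
  assumes i: "i \<in> H" "s3 i" and two: "w ` {j \<in> H. s2 j} \<subseteq> {w i, b}"
  shows "n - t \<le> card dishonest + card (holders s2 (w i))
           + card (holders s2 b \<inter> agreement C n (w i) b)"
proof -
  have "{j \<in> {1..n}. cool_u3 n t H Y A R1 R2 i j}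
      \<subseteq> dishonest \<union> holders s2 (w i) \<union> (holders s2 b \<inter> agreement C n (w i) b)"
  proof
    fix j assume j: "j \<in> {j \<in> {1..n}. cool_u3 n t H Y A R1 R2 i j}"
    show "j \<in> dishonest \<union> holders s2 (w i) \<union> (holders s2 b \<inter> agreement C n (w i) b)"
    proof (cases "j \<in> H")
      case True
      with j have "s2 j" "u1 i j"
        by (auto simp: cool_u3_def cool_u2_def cool_rec2_def)
      with True two i(1) link_in_agreement[of i j] show ?thesis
        by (auto simp: holders_def)
    qed (use j in auto)
  qed
  then have "card {j \<in> {1..n}. cool_u3 n t H Y A R1 R2 i j}
      \<le> card dishonest + card (holders s2 (w i)) + card (holders s2 b \<inter> agreement C n (w i) b)"
    by (intro card_le_if_subset_Un3) auto
  then show ?thesis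
    using i(2) by (simp add: cool_s3_def)
qed

lemma phase2_link_count:
  assumes x: "x \<in> H" "s2 x" "x \<notin> agreement C n (w x) b"
  shows "n - t \<le> card dishonest + card (holders s1 (w x))
           + card {q \<in> other_holders (w x) b. u1 x q}"
proof -
  have "{j \<in> {1..n}. cool_u2 n t H Y A R1 x j}
      \<subseteq> dishonest \<union> holders s1 (w x) \<union> {q \<in> other_holders (w x) b. u1 x q}"
  proof
    fix j assume j: "j \<in> {j \<in> {1..n}. cool_u2 n t H Y A R1 x j}"
    show "j \<in> dishonest \<union> holders s1 (w x) \<union> {q \<in> other_holders (w x) b. u1 x q}"
    proof (cases "j \<in> H")
      case True
      with j have "s1 j" "u1 x j"
        by (auto simp: cool_u2_def cool_rec1_def)
      with True x link_in_agreement[of x j] show ?thesis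
        by (auto simp: holders_def other_holders_def)
    qed (use j in auto)
  qed
  then have "card {j \<in> {1..n}. cool_u2 n t H Y A R1 x j}
      \<le> card dishonest + card (holders s1 (w x)) + card {q \<in> other_holders (w x) b. u1 x q}"
    by (intro card_le_if_subset_Un3) auto
  then show ?thesis
    using x(2) by (simp add: cool_s2_def)
qed

lemma card_holders_add_le_card_honest:
  assumes "a \<noteq> b"
  shows "card (holders s1 a) + card (holders s1 b) + card (other_holders a b) \<le> card H"
proof -
  have "card (holders s1 a \<union> holders s1 b) = card (holders s1 a) + card (holders s1 b)"
    using assms by (intro card_Un_disjoint) (auto simp: holders_def)
  moreover have "card (holders s1 a \<union> holders s1 b \<union> other_holders a b)
      = card (holders s1 a \<union> holders s1 b) + card (other_holders a b)"
    by (intro card_Un_disjoint) (auto simp: holders_def other_holders_def)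
  moreover have "card (holders s1 a \<union> holders s1 b \<union> other_holders a b) \<le> card H"
    by (intro card_mono) (auto simp: holders_def other_holders_def)
  ultimately show ?thesis
    by linarith
qed

lemma card_holders_diff_agreement_ge:
  assumes i: "i \<in> H" "s3 i"
    and two: "w ` {j \<in> H. s2 j} \<subseteq> {w i, b}" "w i \<noteq> b"
    and K: "card (agreement C n (w i) b) \<le> K"
  shows "n - t - card dishonest - K \<le> card (holders s2 (w i) - agreement C n (w i) b)"
proof -
  let ?S = "agreement C n (w i) b"
  have "card (holders s2 (w i) \<inter> ?S) + card (holders s2 b \<inter> ?S)
      = card (holders s2 (w i) \<inter> ?S \<union> holders s2 b \<inter> ?S)"
    using two(2) by (intro card_Un_disjoint[symmetric]) (auto simp: holders_def)
  also have "\<dots> \<le> card ?S"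
    by (intro card_mono) auto
  finally have "card (holders s2 (w i) \<inter> ?S) + card (holders s2 b \<inter> ?S) \<le> K"
    using K by linarith
  moreover have "card (holders s2 (w i) - ?S) = card (holders s2 (w i)) - card (holders s2 (w i) \<inter> ?S)"
    by (simp add: card_Diff_subset_Int)
  moreover have "card (holders s2 (w i) \<inter> ?S) \<le> card (holders s2 (w i))"
    by (intro card_mono) auto
  ultimately show ?thesis
    using phase3_link_count[OF i two(1)] by linarith
qed

lemma card_holders_diff_agreement_mult_le:
  assumes K: "\<And>q. q \<in> H \<Longrightarrow> w q \<noteq> a \<Longrightarrow> card (agreement C n a (w q)) \<le> K"
  shows "card (holders s2 a - agreement C n a b) * (n - t - card dishonest - card (holders s1 a))
           \<le> card (other_holders a b) * K"
proof (rule card_mult_le_by_double_counting)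
  fix x assume "x \<in> holders s2 a - agreement C n a b"
  then show "n - t - card dishonest - card (holders s1 a) \<le> card {q \<in> other_holders a b. u1 x q}"
    using phase2_link_count[of x b] by (auto simp: holders_def)
next
  fix q assume q: "q \<in> other_holders a b"
  then have "{x \<in> holders s2 a - agreement C n a b. u1 x q} \<subseteq> agreement C n a (w q)"
    using link_in_agreement(1)[of _ q] by (auto simp: holders_def other_holders_def)
  then have "card {x \<in> holders s2 a - agreement C n a b. u1 x q} \<le> card (agreement C n a (w q))"
    by (intro card_mono) auto
  also have "\<dots> \<le> K"
    using q K by (auto simp: other_holders_def)
  finally show "card {x \<in> holders s2 a - agreement C n a b. u1 x q} \<le> K" .
qed simp_all

lemma phase3_messages_eq_phase2_messages:
  assumes "card (w ` {i \<in> H. s2 i}) = 2" "1 < card (w ` {i \<in> H. s3 i})"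
  shows "w ` {i \<in> H. s3 i} = w ` {i \<in> H. s2 i}"
proof (rule card_seteq)
  have "s3 i \<Longrightarrow> s2 i" for i
    by (simp add: cool_s3_def)
  then show "w ` {i \<in> H. s3 i} \<subseteq> w ` {i \<in> H. s2 i}"
    by blast
qed (use assms in simp_all)

theorem card_phase3_messages_le_1:
  assumes n: "3 * t + 1 \<le> n" and d: "card dishonest \<le> t" and K: "5 * K \<le> t"
    and dist: "\<And>i j. i \<in> H \<Longrightarrow> j \<in> H \<Longrightarrow> w i \<noteq> w j \<Longrightarrow> card (agreement C n (w i) (w j)) \<le> K"
    and eta2: "card (w ` {i \<in> H. s2 i}) = 2"
  shows "card (w ` {i \<in> H. s3 i}) \<le> 1"
proof (rule ccontr)
  assume "\<not> ?thesis"
  with eta2 have img: "w ` {i \<in> H. s3 i} = w ` {i \<in> H. s2 i}"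
    by (intro phase3_messages_eq_phase2_messages) auto
  from eta2 obtain a b where "a \<noteq> b" and img2: "w ` {i \<in> H. s2 i} = {a, b}"
    unfolding card_2_iff by blast
  then have "a \<in> w ` {i \<in> H. s3 i}" "b \<in> w ` {i \<in> H. s3 i}"
    using img by simp_all
  then obtain ia ib where ia: "ia \<in> H" "s3 ia" "w ia = a" and ib: "ib \<in> H" "s3 ib" "w ib = b"
    by blast
  define N where "N = n - t - card dishonest"
  have dist_a: "card (agreement C n a (w q)) \<le> K" if "q \<in> H" "w q \<noteq> a" for q
    using dist[OF ia(1) that(1)] that(2) ia(3) by simp
  have dist_b: "card (agreement C n b (w q)) \<le> K" if "q \<in> H" "w q \<noteq> b" for q
    using dist[OF ib(1) that(1)] that(2) ib(3) by simp
  have S_ba: "agreement C n b a = agreement C n a b" and O_ba: "other_holders b a = other_holders a b"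
    by (rule agreement_commute) (auto simp: other_holders_def)
  have "N - K \<le> card (holders s2 a - agreement C n a b)"
    using card_holders_diff_agreement_ge[OF ia(1,2), of b K] dist_a[OF ib(1)] img2 \<open>a \<noteq> b\<close>
    unfolding ia(3) N_def ib(3) by simp
  moreover have "N - K \<le> card (holders s2 b - agreement C n a b)"
    using card_holders_diff_agreement_ge[OF ib(1,2), of a K] dist_b[OF ia(1)] img2 \<open>a \<noteq> b\<close>
    unfolding ib(3) N_def ia(3) S_ba by (simp add: insert_commute)
  moreover have "card (holders s2 a - agreement C n a b) * (N - card (holders s1 a))
      \<le> card (other_holders a b) * K"
    using card_holders_diff_agreement_mult_le[OF dist_a, of b] unfolding N_def .
  moreover have "card (holders s2 b - agreement C n a b) * (N - card (holders s1 b))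
      \<le> card (other_holders a b) * K"
    using card_holders_diff_agreement_mult_le[OF dist_b, of a] unfolding N_def S_ba O_ba .
  moreover have "card (holders s1 a) + card (holders s1 b) + card (other_holders a b) \<le> N + t"
    using card_holders_add_le_card_honest[OF \<open>a \<noteq> b\<close>] card_honest n d N_def by linarith
  moreover have "t + 1 \<le> N"
    using n d by (simp add: N_def)
  ultimately show False
    using counting_bounds_inconsistent[OF K] by blast
qed

end

theorem lemma12:
  fixes n t l :: nat
    and alpha :: "nat \<Rightarrow> 'f::{field,finite}"
    and beta :: "bool list \<Rightarrow> 'f"
    and H :: "nat set"
    and w :: "nat \<Rightarrow> bool list"
    and A :: "nat \<Rightarrow> nat \<Rightarrow> 'f \<times> 'f"
    and R1 R2 :: "nat \<Rightarrow> nat \<Rightarrow> bool"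
  defines "k \<equiv> cool_k t"
    and "c \<equiv> cool_c n t l"
  defines "Y \<equiv> (\<lambda>j i. cool_code alpha beta k c (w j) i)"
  assumes n_ge: "n \<ge> 3 * t + 1"
    and field_card: "CARD('f) = 2 ^ c"
    and alpha_inj: "inj_on alpha {1..n}"
    and alpha_nz: "\<forall>i\<in>{1..n}. alpha i \<noteq> 0"
    and beta_bij: "bij_betw beta {bs. length bs = c} UNIV"
    and H_sub: "H \<subseteq> {1..n}"
    and dishonest: "card ({1..n} - H) \<le> t"
    and msgs: "\<forall>i\<in>H. length (w i) = l"
    and eta2: "cool_eta H w (cool_s2 n t H Y A R1) = 2"
  shows "cool_eta H w (cool_s3 n t H Y A R1 R2) \<le> 1"
proof -
  \<comment> \<open>Only injectivity of alpha and beta enters.\<close>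
  interpret cool_execution n t H "cool_code alpha beta k c" w A R1 R2
    using H_sub by unfold_locales
  have "k \<le> n" "5 * (k - 1) \<le> t"
    using n_ge by (simp_all add: k_def cool_k_def)
  moreover have "l \<le> k * c"
    unfolding k_def c_def by (rule le_cool_k_mult_cool_c)
  moreover have "inj_on beta {bs. length bs = c}"
    using beta_bij by (rule bij_betw_imp_inj_on)
  ultimately have "card (agreement (cool_code alpha beta k c) n (w i) (w j)) \<le> k - 1"
    if "i \<in> H" "j \<in> H" "w i \<noteq> w j" for i j
    using card_agreement_cool_code_le[OF alpha_inj] that msgs by blast
  with \<open>5 * (k - 1) \<le> t\<close> show ?thesis
    using card_phase3_messages_le_1[OF n_ge dishonest] eta2
    unfolding cool_eta_def Y_def by blast
qed

end
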